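(* Let $N\ge d$ and let $K\subset\mathbb{R}^d$ be a compact convex polytope of dimension $d$ with codimension-one faces $F_0,\dots,F_N$. Suppose every collection of $d$ normal vectors of the hyperplanes containing these faces is linearly independent. Let $S\supseteq K$ be a $d$-dimensional simplex each of whose codimension-one faces contains a face of $K$. Then for every nonzero vector $b\in\mathbb{R}^d$, the translate $b+K$ contains points not in $S$.
   Context: The simplices $S$ considered are those appearing in a representation $K=\bigcap_j S_j$ of $K$ as an intersection of $d$-dimensional simplices each of whose faces contains a face of $K$. *)

theory Defs
  imports "HOL-Analysis.Analysis"
begin

end

theory Submission
  imports Defs
begin

(* If b + K \<subseteq> S and every facet of S touches K, then every facet inequality a \<bullet> x \<le> c of S
   is tight at some point f of K while still holding at b + f, so a \<bullet> b \<le> 0. Hence b lies in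
   the recession cone of S, which is impossible for a bounded S unless b = 0. *)

lemma polyhedron_ray_mem_of_translate_subset:
  fixes S T :: "'a::euclidean_space set"
  assumes "polyhedron S" and "T \<subseteq> S" and "T \<noteq> {}" and "(\<lambda>x. b + x) ` T \<subseteq> S"
    and facets_meet: "\<And>G. G facet_of S \<Longrightarrow> G \<inter> T \<noteq> {}"
    and "s \<in> S" and "t \<ge> 0"
  shows "s + t *\<^sub>R b \<in> S"
proof -
  obtain F where "finite F" and seq: "S = affine hull S \<inter> \<Inter>F"
    and "\<And>h. h \<in> F \<Longrightarrow> \<exists>a c. a \<noteq> 0 \<and> h = {x. a \<bullet> x \<le> c}"
    and min: "\<And>F'. F' \<subset> F \<Longrightarrow> S \<subset> affine hull S \<inter> \<Inter>F'"
    using \<open>polyhedron S\<close> by (simp add: polyhedron_Int_affine_minimal) meson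
  then obtain a c where ac: "\<And>h. h \<in> F \<Longrightarrow> a h \<noteq> 0 \<and> h = {x. a h \<bullet> x \<le> c h}"
    by metis
  have normal: "a h \<bullet> b \<le> 0" if "h \<in> F" for h
  proof -
    have "S \<inter> {x. a h \<bullet> x = c h} facet_of S"
      using facet_of_polyhedron_explicit [OF \<open>finite F\<close> seq ac min] that by blast
    then obtain f where f: "f \<in> T" "a h \<bullet> f = c h"
      using facets_meet by blast
    then have "b + f \<in> h"
      using assms(4) seq that by blast
    then have "a h \<bullet> (b + f) \<le> c h"
      using ac[OF that] by blast
    then show ?thesis
      using f(2) by (simp add: inner_add_right)
  qed
  have "s + t *\<^sub>R b \<in> h" if "h \<in> F" for h
  proof -
    have "a h \<bullet> s \<le> c h"
      using ac[OF that] \<open>s \<in> S\<close> seq that by blast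
    moreover have "t * (a h \<bullet> b) \<le> 0"
      using normal[OF that] \<open>t \<ge> 0\<close> by (simp add: mult_nonneg_nonpos)
    ultimately have "a h \<bullet> (s + t *\<^sub>R b) \<le> c h"
      by (simp add: inner_add_right)
    then show ?thesis
      using ac[OF that] by blast
  qed
  then have "s + t *\<^sub>R b \<in> \<Inter>F"
    by blast
  moreover obtain f where "f \<in> T"
    using \<open>T \<noteq> {}\<close> by blast
  then have "s + t *\<^sub>R ((b + f) - f) \<in> affine hull S"
    using assms(2,4) \<open>s \<in> S\<close> by (intro mem_affine_3_minus) (auto intro: hull_inc)
  ultimately show ?thesis
    using seq by auto
qed

lemma bounded_ray_subset_imp_zero:
  fixes S :: "'a::real_normed_vector set"
  assumes "bounded S" and ray: "\<And>t. t \<ge> 0 \<Longrightarrow> s + t *\<^sub>R b \<in> S"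
  shows "b = 0"
proof (rule ccontr)
  assume "b \<noteq> 0"
  obtain B where B: "\<And>x. x \<in> S \<Longrightarrow> norm x \<le> B"
    using \<open>bounded S\<close> by (meson bounded_iff)
  define t where "t = (B + norm s + 1) / norm b"
  have "B \<ge> 0"
    using B[OF ray[of 0]] by (simp add: order_trans[OF norm_ge_zero])
  with \<open>b \<noteq> 0\<close> have "t \<ge> 0" and "norm (t *\<^sub>R b) = B + norm s + 1"
    unfolding t_def by simp_all
  moreover have "norm (t *\<^sub>R b) \<le> norm (s + t *\<^sub>R b) + norm s"
    using norm_triangle_ineq4[of "s + t *\<^sub>R b" s] by (simp add: norm_minus_commute)
  ultimately show False
    using B[OF ray] by (smt (verit))
qed

lemma facet_nonempty_of_aff_dim_pos:
  assumes "F facet_of K" and "aff_dim K > 0"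
  shows "F \<noteq> {}"
  using assms by (auto simp: facet_of_def)

theorem lemma3p9:
  fixes K S :: "'a::euclidean_space set" and N :: nat
  assumes "N \<ge> DIM('a)"
    and "polytope K" and "aff_dim K = int DIM('a)"
    and "card {F. F facet_of K} = N + 1"
    and "\<And>Fs nrm. Fs \<subseteq> {F. F facet_of K} \<Longrightarrow> card Fs = DIM('a) \<Longrightarrow>
           (\<forall>F\<in>Fs. nrm F \<noteq> 0 \<and> (\<exists>c. F \<subseteq> {x. nrm F \<bullet> x = c})) \<Longrightarrow>
           independent (nrm ` Fs) \<and> card (nrm ` Fs) = DIM('a)"
    and "int DIM('a) simplex S" and "K \<subseteq> S"
    and "\<forall>G. G facet_of S \<longrightarrow> (\<exists>F. F facet_of K \<and> F \<subseteq> G)"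
    and "b \<noteq> 0"
  shows "\<not> ((\<lambda>x. b + x) ` K \<subseteq> S)"
proof
  assume translate: "(\<lambda>x. b + x) ` K \<subseteq> S"
  have "aff_dim K > 0"
    using assms(3) by simp
  then have "K \<noteq> {}"
    by auto
  have facets_meet: "G \<inter> K \<noteq> {}" if "G facet_of S" for G
  proof -
    obtain F where "F facet_of K" and "F \<subseteq> G"
      using assms(8) \<open>G facet_of S\<close> by blast
    moreover have "F \<noteq> {}"
      using facet_nonempty_of_aff_dim_pos[OF \<open>F facet_of K\<close> \<open>aff_dim K > 0\<close>] .
    ultimately show ?thesis
      using facet_of_imp_subset by blast
  qed
  have "polyhedron S"
    using assms(6) simplex_imp_polyhedron by blast
  obtain s where "s \<in> S"
    using \<open>K \<noteq> {}\<close> assms(7) by blast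
  have "s + t *\<^sub>R b \<in> S" if "t \<ge> 0" for t
    by (rule polyhedron_ray_mem_of_translate_subset[OF \<open>polyhedron S\<close> assms(7) \<open>K \<noteq> {}\<close>
          translate facets_meet \<open>s \<in> S\<close> that])
  moreover have "bounded S"
    using assms(6) compact_simplex compact_imp_bounded by blast
  ultimately show False
    using bounded_ray_subset_imp_zero assms(9) by metis
qed

end
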